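(* Let $q\ge 2$, $n\ge 1$, let $\mathcal C\subseteq \triangle_n^{q-1}$ be a multiset code, let $h_{\rm ins},h_{\rm del},h_{\rm sub}$ be non-negative integers and set $h=h_{\rm ins}+h_{\rm del}+2h_{\rm sub}$. The following are equivalent: (a) $\mathcal C$ can correct $h_{\rm ins}$ insertions, $h_{\rm del}$ deletions and $h_{\rm sub}$ substitutions; (b) $\mathcal C$ can correct $h$ insertions; (c) $\mathcal C$ can correct $h$ deletions.
   Context: Alphabet $[q]=\{0,1,\dots,q-1\}$, $q\ge2$. A multiset over $[q]$ is identified with its multiplicity vector $\mathbf x=(x_0,\dots,x_{q-1})\in\mathbb Z^q$, $x_i$ = number of copies of symbol $i$. $\triangle_n^{q-1}=\{\mathbf x\in\mathbb Z^q: x_i\ge0,\ \sum_{i=0}^{q-1}x_i=n\}$ (multisets of cardinality $n$). A multiset code of length $n$ over $[q]$ is a subset of $\triangle_n^{q-1}$ with at least two elements. Errors act on the multiset: a deletion removes one element present in the multiset (i.e. $\mathbf x\mapsto \mathbf x-\mathbf e_i$ for some $i$ with current multiplicity $\ge1$), an insertion adds one symbol $i\in[q]$ ($\mathbf x\mapsto\mathbf x+\mathbf e_i$), a substitution replaces one present element $i$ by a symbol $j$ ($\mathbf x\mapsto \mathbf x-\mathbf e_i+\mathbf e_j$); $\mathbf e_i$ is the $i$-th unit vector. A code can correct $a$ insertions, $b$ deletions and $c$ substitutions if no two distinct codewords can yield the same output multiset after being impaired by arbitrary patterns of at most $a$ insertions, at most $b$ deletions and at most $c$ substitutions; "correct $h$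 deletions" means the case $a=c=0,b=h$, and similarly for insertions. *)

theory Defs
  imports Main
begin

text \<open>A multiset over the alphabet [q] = {0,..,q-1} is represented by its multiplicity
vector, a list of naturals of length q (entry i = multiplicity of symbol i).\<close>

definition simplex :: "nat \<Rightarrow> nat \<Rightarrow> nat list set" where
  "simplex q n = {x. length x = q \<and> sum_list x = n}"

definition multiset_code :: "nat \<Rightarrow> nat \<Rightarrow> nat list set \<Rightarrow> bool" where
  "multiset_code q n C \<longleftrightarrow> C \<subseteq> simplex q n \<and> 2 \<le> card C"

inductive impair :: "nat \<Rightarrow> nat list \<Rightarrow> nat \<Rightarrow> nat \<Rightarrow> nat \<Rightarrow> nat list \<Rightarrow> bool"
  for q :: nat where
  refl: "impair q x 0 0 0 x"
| ins: "impair q x i d s y \<Longrightarrow> k < length y \<Longrightarrow>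
        impair q x (Suc i) d s (y[k := y ! k + 1])"
| del: "impair q x i d s y \<Longrightarrow> k < length y \<Longrightarrow> 1 \<le> y ! k \<Longrightarrow>
        impair q x i (Suc d) s (y[k := y ! k - 1])"
| sub: "impair q x i d s y \<Longrightarrow> k < length y \<Longrightarrow> l < length y \<Longrightarrow> 1 \<le> y ! k \<Longrightarrow>
        impair q x i d (Suc s) ((y[k := y ! k - 1])[l := (y[k := y ! k - 1]) ! l + 1])"

definition outputs :: "nat \<Rightarrow> nat \<Rightarrow> nat \<Rightarrow> nat \<Rightarrow> nat list \<Rightarrow> nat list set" where
  "outputs q a b c x = {y. \<exists>i d s. i \<le> a \<and> d \<le> b \<and> s \<le> c \<and> impair q x i d s y}"

definition corrects :: "nat \<Rightarrow> nat \<Rightarrow> nat \<Rightarrow> nat \<Rightarrow> nat list set \<Rightarrow> bool" where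
  "corrects q a b c C \<longleftrightarrow>
     (\<forall>x\<in>C. \<forall>y\<in>C. x \<noteq> y \<longrightarrow> outputs q a b c x \<inter> outputs q a b c y = {})"

end

theory Submission
  imports Defs
begin

text \<open>Let d(x, y) be the l1 distance of the multiplicity vectors. An insertion or deletion
changes d by at most 1 and a substitution by at most 2, so a common output of x and y under at
most a insertions, b deletions and c substitutions forces d(x, y) \<le> 2(a + b + 2c). Conversely,
if x \<noteq> y have equal cardinality, there are coordinates k, l with y_k < x_k and x_l < y_l; then
an insertion on both sides, a deletion on both sides, or a substitution k \<rightarrow> l on one side
lowers d by 2, so by induction d(x, y) \<le> 2(a + b + 2c) yields a common output. Thus a code
corrects (a, b, c) errors iff its minimum l1 distance exceeds 2(a + b + 2c), a condition that
only depends on a + b + 2c.\<close>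

definition l1_dist :: "nat list \<Rightarrow> nat list \<Rightarrow> int" where
  "l1_dist x y = (\<Sum>j<length x. \<bar>int (x!j) - int (y!j)\<bar>)"

lemma l1_dist_commute: "length x = length y \<Longrightarrow> l1_dist x y = l1_dist y x"
  unfolding l1_dist_def by (simp add: abs_minus_commute)

lemma l1_dist_triangle:
  assumes "length y = length x" "length z = length x"
  shows "l1_dist x y \<le> l1_dist x z + l1_dist z y"
proof -
  have "l1_dist x y \<le> (\<Sum>j<length x. \<bar>int (x!j) - int (z!j)\<bar> + \<bar>int (z!j) - int (y!j)\<bar>)"
    unfolding l1_dist_def by (rule sum_mono) arith
  also have "\<dots> = l1_dist x z + l1_dist z y"
    unfolding l1_dist_def using assms by (simp add: sum.distrib)
  finally show ?thesis .
qed

lemma l1_dist_ge_coord: "k < length x \<Longrightarrow> \<bar>int (x!k) - int (y!k)\<bar> \<le> l1_dist x y"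
  unfolding l1_dist_def by (rule member_le_sum) auto

lemma l1_dist_update_right:
  assumes "k < length y" "length x = length y"
  shows "l1_dist x (y[k := v]) = l1_dist x y + \<bar>int (x!k) - int v\<bar> - \<bar>int (x!k) - int (y!k)\<bar>"
proof -
  let ?f = "\<lambda>w j. \<bar>int (x!j) - int (w!j)\<bar>"
  have k: "k \<in> {..<length x}" using assms by simp
  have "(\<Sum>j\<in>{..<length x} - {k}. ?f (y[k := v]) j) = (\<Sum>j\<in>{..<length x} - {k}. ?f y j)"
    by (rule sum.cong) auto
  then show ?thesis
    unfolding l1_dist_def using assms
      sum.remove[OF _ k, of "?f y"] sum.remove[OF _ k, of "?f (y[k := v])"] by simp
qed

lemma l1_dist_update_le:
  assumes "k < length y" "length x = length y"
  shows "l1_dist x (y[k := v]) \<le> l1_dist x y + \<bar>int v - int (y!k)\<bar>"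
  using l1_dist_update_right[OF assms, of v] by linarith

lemma l1_dist_update_toward:
  assumes "k < length y" "length x = length y"
    and "\<bar>int (x!k) - int v\<bar> + 1 = \<bar>int (x!k) - int (y!k)\<bar>"
  shows "l1_dist x (y[k := v]) = l1_dist x y - 1"
  using l1_dist_update_right[OF assms(1,2), of v] assms(3) by linarith

lemma l1_dist_update_toward_left:
  assumes "k < length x" "length x = length y"
    and "\<bar>int v - int (y!k)\<bar> + 1 = \<bar>int (x!k) - int (y!k)\<bar>"
  shows "l1_dist (x[k := v]) y = l1_dist x y - 1"
proof -
  have "l1_dist (x[k := v]) y = l1_dist y (x[k := v])" using assms(2) by (simp add: l1_dist_commute)
  also have "\<dots> = l1_dist y x - 1"
    using assms by (intro l1_dist_update_toward) (auto simp: abs_minus_commute)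
  finally show ?thesis using assms(2) by (simp add: l1_dist_commute)
qed

lemma l1_dist_ins_both:
  assumes "length x = length y" "k < length x" "l < length x" "y!k < x!k" "x!l < y!l"
  shows "l1_dist (x[l := x!l + 1]) (y[k := y!k + 1]) = l1_dist x y - 2"
proof -
  have "k \<noteq> l" using assms(4,5) by auto
  then have "l1_dist (x[l := x!l + 1]) (y[k := y!k + 1]) = l1_dist (x[l := x!l + 1]) y - 1"
    using assms by (intro l1_dist_update_toward) auto
  also have "\<dots> = l1_dist x y - 2"
    using assms by (subst l1_dist_update_toward_left) auto
  finally show ?thesis .
qed

lemma l1_dist_del_both:
  assumes "length x = length y" "k < length x" "l < length x" "y!k < x!k" "x!l < y!l"
  shows "l1_dist (x[k := x!k - 1]) (y[l := y!l - 1]) = l1_dist x y - 2"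
proof -
  have "k \<noteq> l" using assms(4,5) by auto
  then have "l1_dist (x[k := x!k - 1]) (y[l := y!l - 1]) = l1_dist (x[k := x!k - 1]) y - 1"
    using assms by (intro l1_dist_update_toward) auto
  also have "\<dots> = l1_dist x y - 2"
    using assms by (subst l1_dist_update_toward_left) auto
  finally show ?thesis .
qed

lemma l1_dist_substitute:
  assumes "length x = length y" "k < length x" "l < length x" "y!k < x!k" "x!l < y!l"
  shows "l1_dist (x[k := x!k - 1, l := x!l + 1]) y = l1_dist x y - 2"
proof -
  have "k \<noteq> l" using assms(4,5) by auto
  then have "l1_dist (x[k := x!k - 1, l := x!l + 1]) y = l1_dist (x[k := x!k - 1]) y - 1"
    using assms by (intro l1_dist_update_toward_left) auto
  also have "\<dots> = l1_dist x y - 2"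
    using assms by (subst l1_dist_update_toward_left) auto
  finally show ?thesis .
qed

lemma exists_nth_less_of_sum_list_eq:
  fixes x y :: "nat list"
  assumes "length x = length y" "sum_list x = sum_list y" "x \<noteq> y"
  shows "\<exists>k < length x. x!k < y!k"
proof (rule ccontr)
  assume "\<not> ?thesis"
  then have ge: "\<forall>k\<in>{..<length x}. y!k \<le> x!k" by (meson leI lessThan_iff)
  obtain j where j: "j < length x" "x!j \<noteq> y!j" using assms(1,3) nth_equalityI by blast
  then have "y!j < x!j" using ge[rule_format, of j] by simp
  with j(1) have "\<exists>k\<in>{..<length x}. y!k < x!k" by blast
  with ge have "(\<Sum>k<length x. y!k) < (\<Sum>k<length x. x!k)"
    by (intro sum_strict_mono_ex1) auto
  then show False using assms(1,2) by (simp add: sum_list_sum_nth atLeast0LessThan)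
qed

lemma impair_length: "impair q x i d s y \<Longrightarrow> length y = length x"
  by (induction rule: impair.induct) auto

lemma impair_trans:
  assumes "impair q x i d s y" "impair q y i' d' s' z"
  shows "impair q x (i + i') (d + d') (s + s') z"
  using assms(2,1)
proof (induction rule: impair.induct)
  case (ins y i' d' s' z k)
  then show ?case unfolding add_Suc_right by (intro impair.ins) auto
next
  case (del y i' d' s' z k)
  then show ?case unfolding add_Suc_right by (intro impair.del) auto
next
  case (sub y i' d' s' z k l)
  then show ?case unfolding add_Suc_right by (intro impair.sub) auto
qed simp

lemma impair_single_ins: "k < length x \<Longrightarrow> impair q x 1 0 0 (x[k := x!k + 1])"
  using impair.ins[OF impair.refl] by simp

lemma impair_single_del: "k < length x \<Longrightarrow> 1 \<le> x!k \<Longrightarrow> impair q x 0 1 0 (x[k := x!k - 1])"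
  using impair.del[OF impair.refl] by simp

lemma impair_single_sub:
  "k < length x \<Longrightarrow> l < length x \<Longrightarrow> k \<noteq> l \<Longrightarrow> 1 \<le> x!k \<Longrightarrow>
   impair q x 0 0 1 (x[k := x!k - 1, l := x!l + 1])"
  using impair.sub[OF impair.refl, of k x l] by simp

lemma impair_l1_dist: "impair q x i d s z \<Longrightarrow> l1_dist x z \<le> int i + int d + 2 * int s"
proof (induction rule: impair.induct)
  case (refl x)
  then show ?case by (simp add: l1_dist_def)
next
  case (ins x i d s y k)
  have "length x = length y" using impair_length[OF ins.hyps(1)] by simp
  then show ?case using ins l1_dist_update_le[of k y x "y!k + 1"] by simp
next
  case (del x i d s y k)
  have "length x = length y" using impair_length[OF del.hyps(1)] by simp
  then show ?case using del l1_dist_update_le[of k y x "y!k - 1"] by simp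
next
  case (sub x i d s y k l)
  let ?y' = "y[k := y!k - 1]"
  have len: "length x = length y" using impair_length[OF sub.hyps(1)] by simp
  have "l1_dist x (?y'[l := ?y'!l + 1]) \<le> l1_dist x ?y' + 1"
    using sub.hyps(3) len l1_dist_update_le[of l ?y' x "?y'!l + 1"] by simp
  moreover have "l1_dist x ?y' \<le> l1_dist x y + 1"
    using sub.hyps(2,4) len l1_dist_update_le[of k y x "y!k - 1"] by simp
  ultimately show ?case using sub.IH by simp
qed

lemma self_mem_outputs: "x \<in> outputs q a b c x"
  unfolding outputs_def using impair.refl by fastforce

lemma outputs_impair_trans:
  assumes "impair q x i d s y" "z \<in> outputs q a b c y"
    and "i + a \<le> a'" "d + b \<le> b'" "s + c \<le> c'"
  shows "z \<in> outputs q a' b' c' x"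
proof -
  obtain i' d' s' where "i' \<le> a" "d' \<le> b" "s' \<le> c" "impair q y i' d' s' z"
    using assms(2) unfolding outputs_def by blast
  then show ?thesis
    unfolding outputs_def using impair_trans[OF assms(1)] assms(3-5)
    by (intro CollectI exI[of _ "i + i'"] exI[of _ "d + d'"] exI[of _ "s + s'"]) auto
qed

lemma l1_dist_le_of_common_output:
  assumes "z \<in> outputs q a b c x" "z \<in> outputs q a b c y" "length x = length y"
  shows "l1_dist x y \<le> 2 * int (a + b + 2 * c)"
proof -
  obtain i d s where x: "i \<le> a" "d \<le> b" "s \<le> c" "impair q x i d s z"
    using assms(1) unfolding outputs_def by blast
  obtain i' d' s' where y: "i' \<le> a" "d' \<le> b" "s' \<le> c" "impair q y i' d' s' z"
    using assms(2) unfolding outputs_def by blast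
  have "l1_dist x y \<le> l1_dist x z + l1_dist z y"
    using assms(3) impair_length[OF x(4)] by (intro l1_dist_triangle) auto
  also have "\<dots> = l1_dist x z + l1_dist y z"
    using assms(3) impair_length[OF y(4)] by (simp add: l1_dist_commute)
  also have "\<dots> \<le> 2 * int (a + b + 2 * c)"
    using impair_l1_dist[OF x(4)] impair_l1_dist[OF y(4)] x(1-3) y(1-3) by simp
  finally show ?thesis .
qed

lemma outputs_meet:
  assumes "length x = length y" "sum_list x = sum_list y"
    and "l1_dist x y \<le> 2 * int (a + b + c1 + c2)"
  shows "outputs q a b c1 x \<inter> outputs q a b c2 y \<noteq> {}"
  using assms
proof (induction "a + b + c1 + c2" arbitrary: x y a b c1 c2 rule: less_induct)
  case less
  show ?case
  proof (cases "x = y")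
    case True
    then show ?thesis using self_mem_outputs by blast
  next
    case False
    obtain k where k: "k < length x" "y!k < x!k"
      using exists_nth_less_of_sum_list_eq[of y x] less.prems False by auto
    obtain l where l: "l < length x" "x!l < y!l"
      using exists_nth_less_of_sum_list_eq[of x y] less.prems False by auto
    have kl: "k \<noteq> l" using k l by auto
    have ky: "k < length y" and ly: "l < length y" using k l less.prems(1) by auto
    note nth_le = member_le_sum_list[OF nth_mem[OF k(1)]] member_le_sum_list[OF nth_mem[OF ly]]
    have "0 < l1_dist x y" using l1_dist_ge_coord[OF k(1), of y] k(2) by linarith
    then have "0 < a + b + c1 + c2" using less.prems(3) by arith
    then consider "0 < a" | "0 < b" | "0 < c1" | "0 < c2" by auto
    then show ?thesis
    proof cases
      case 1
      let ?x' = "x[l := x!l + 1]" and ?y' = "y[k := y!k + 1]"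
      have "outputs q (a - 1) b c1 ?x' \<inter> outputs q (a - 1) b c2 ?y' \<noteq> {}"
        using 1 less.prems k l l1_dist_ins_both[OF less.prems(1) k(1) l(1) k(2) l(2)]
        by (intro less.hyps) (auto simp: sum_list_update)
      then obtain z where zx: "z \<in> outputs q (a - 1) b c1 ?x'" and zy: "z \<in> outputs q (a - 1) b c2 ?y'"
        by blast
      have "z \<in> outputs q a b c1 x"
        by (rule outputs_impair_trans[OF impair_single_ins[OF l(1)] zx]) (use 1 in auto)
      moreover have "z \<in> outputs q a b c2 y"
        by (rule outputs_impair_trans[OF impair_single_ins[OF ky] zy]) (use 1 in auto)
      ultimately show ?thesis by blast
    next
      case 2
      let ?x' = "x[k := x!k - 1]" and ?y' = "y[l := y!l - 1]"
      have "outputs q a (b - 1) c1 ?x' \<inter> outputs q a (b - 1) c2 ?y' \<noteq> {}"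
        using 2 less.prems k l l1_dist_del_both[OF less.prems(1) k(1) l(1) k(2) l(2)]
        by (intro less.hyps) (auto simp: sum_list_update)
      then obtain z where zx: "z \<in> outputs q a (b - 1) c1 ?x'" and zy: "z \<in> outputs q a (b - 1) c2 ?y'"
        by blast
      have "z \<in> outputs q a b c1 x"
        by (rule outputs_impair_trans[OF impair_single_del[OF k(1)] zx]) (use 2 k in auto)
      moreover have "z \<in> outputs q a b c2 y"
        by (rule outputs_impair_trans[OF impair_single_del[OF ly] zy]) (use 2 l in auto)
      ultimately show ?thesis by blast
    next
      case 3
      let ?x' = "x[k := x!k - 1, l := x!l + 1]"
      have "outputs q a b (c1 - 1) ?x' \<inter> outputs q a b c2 y \<noteq> {}"
        using 3 less.prems k l kl nth_le l1_dist_substitute[OF less.prems(1) k(1) l(1) k(2) l(2)]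
        by (intro less.hyps) (auto simp: sum_list_update)
      then obtain z where zx: "z \<in> outputs q a b (c1 - 1) ?x'" and zy: "z \<in> outputs q a b c2 y"
        by blast
      have "z \<in> outputs q a b c1 x"
        by (rule outputs_impair_trans[OF impair_single_sub[OF k(1) l(1) kl] zx]) (use 3 k in auto)
      with zy show ?thesis by blast
    next
      case 4
      let ?y' = "y[l := y!l - 1, k := y!k + 1]"
      have "l1_dist x ?y' = l1_dist x y - 2"
        using less.prems(1) k l l1_dist_substitute[of y x l k] by (simp add: l1_dist_commute)
      then have "outputs q a b c1 x \<inter> outputs q a b (c2 - 1) ?y' \<noteq> {}"
        using 4 less.prems k l kl nth_le by (intro less.hyps) (auto simp: sum_list_update)
      then obtain z where zx: "z \<in> outputs q a b c1 x" and zy: "z \<in> outputs q a b (c2 - 1) ?y'"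
        by blast
      have "z \<in> outputs q a b c2 y"
        by (rule outputs_impair_trans[OF impair_single_sub[OF ly ky kl[symmetric]] zy]) (use 4 l in auto)
      with zx show ?thesis by blast
    qed
  qed
qed

lemma corrects_iff_l1_dist:
  assumes "C \<subseteq> simplex q n"
  shows "corrects q a b c C \<longleftrightarrow>
    (\<forall>x\<in>C. \<forall>y\<in>C. x \<noteq> y \<longrightarrow> 2 * int (a + b + 2 * c) < l1_dist x y)"
proof -
  have "outputs q a b c x \<inter> outputs q a b c y = {} \<longleftrightarrow> 2 * int (a + b + 2 * c) < l1_dist x y"
    if "x \<in> C" "y \<in> C" for x y
  proof
    have len: "length x = length y" and sum: "sum_list x = sum_list y"
      using that assms by (auto simp: simplex_def)
    show "2 * int (a + b + 2 * c) < l1_dist x y" if "outputs q a b c x \<inter> outputs q a b c y = {}"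
    proof (rule ccontr)
      assume "\<not> ?thesis"
      then have "l1_dist x y \<le> 2 * int (a + b + c + c)" by simp
      with that show False using outputs_meet[OF len sum] by blast
    qed
    show "outputs q a b c x \<inter> outputs q a b c y = {}" if "2 * int (a + b + 2 * c) < l1_dist x y"
      using that l1_dist_le_of_common_output[OF _ _ len] by fastforce
  qed
  then show ?thesis unfolding corrects_def by blast
qed

theorem mainTheorem1:
  fixes q n h_ins h_del h_sub h :: nat and C :: "nat list set"
  assumes "q \<ge> 2" and "n \<ge> 1" and "multiset_code q n C"
    and "h = h_ins + h_del + 2 * h_sub"
  shows "(corrects q h_ins h_del h_sub C \<longleftrightarrow> corrects q h 0 0 C)
       \<and> (corrects q h 0 0 C \<longleftrightarrow> corrects q 0 h 0 C)"
proof -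
  have "C \<subseteq> simplex q n" using assms(3) by (simp add: multiset_code_def)
  then show ?thesis
    using corrects_iff_l1_dist[of C q n h_ins h_del h_sub] corrects_iff_l1_dist[of C q n h 0 0]
      corrects_iff_l1_dist[of C q n 0 h 0] assms(4) by simp
qed

end
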